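(* In the setting described in the context, assume $x_h^2\beta>3$ and $n>\max\{\frac1{2\alpha x_h^2\beta}-\frac1{x_h^2\beta},\ \frac\alpha{x_h^2\beta},\ \frac\alpha{x_h^2\beta}(e^{\frac2{x_h^2\beta}}-2)+\frac1{2x_h^2\beta}\}$, and let $\dot k=\frac1{2n}\log_\lambda\Big(\frac1{1+\frac1{\alpha\eta}(1-\lambda^2)}\Big)-1$. Then for every $r\in\{1,\dots,n\}$, $$\frac{(\mu_{\lceil\dot k\rceil n+n}-\hat\mu^r_{\lceil\dot k\rceil n+n})^2}{(\hat\sigma^r_{\lceil\dot k\rceil n+n})^2}\ge e^{-\frac2{x_h^2\beta}}\frac\alpha{v_1}\Big(\frac3{32x_h^2\beta}\Big)^2\Big(\frac cn\Big)^2,\qquad v_1=\max\{6,1+2e^{\frac1{x_h^2\beta}}\}.$$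
   Context: Fix $\alpha,\beta,x_h,c>0$ and an integer $n\ge2$. Model: $y=\theta x+\xi$, $\xi\sim\mathcal N(0,\beta^{-1})$, prior $\theta\sim\mathcal N(0,\alpha^{-1})$. Databases: $D_1$ consists of $n$ copies of $(x_h,cx_h)$; $D_2$ consists of $n-1$ copies of $(x_h,cx_h)$ and one copy of $(x_h/2,cx_h/2)$. Cyclic SGLD with batch size 1 and step size $\eta=\frac2{(\alpha+nx_h^2\beta)^2}$: $\theta_0\sim\mathcal N(0,\alpha^{-1})$, $\theta_{j+1}=\theta_j+\frac\eta2[-\alpha\theta_j+n\beta(y_{i_j}-\theta_jx_{i_j})x_{i_j}]+\sqrt\eta\,\xi_j$ with $\xi_j\sim\mathcal N(0,1)$ i.i.d. independent of $\theta_0$; the database is shuffled once uniformly and its samples are then used cyclically. On $D_1$ the $j$-th iterate is $\mathcal N(\mu_j,\sigma_j^2)$. On $D_2$ let $r\in\{1,\dots,n\}$ be the position within each epoch at which $(x_h/2,cx_h/2)$ is used; conditionally on $r$ the $j$-th iterate is $\hat\theta^r_j\sim\mathcal N(\hat\mu^r_j,(\hat\sigma^r_j)^2)$. Set $\lambda=1-\frac\eta2(\alpha+nx_h^2\beta)$, $\hat\lambda=1-\frac\eta2(\alpha+n\frac{x_h^2}4\beta)$. *)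

theory Defs
  imports Complex_Main
begin

text \<open>Cyclic SGLD for Bayesian linear regression y = theta x + xi, xi ~ N(0, 1/beta),
  prior theta ~ N(0, 1/alpha). Since the initial iterate and all noises are Gaussian and the
  update is affine, each iterate is Gaussian; its mean and variance obey the affine recursions
  below (theta_0 ~ N(0,1/alpha)).\<close>

definition sgld_eta :: "real \<Rightarrow> real \<Rightarrow> real \<Rightarrow> nat \<Rightarrow> real" where
  "sgld_eta alpha beta xh n = 2 / (alpha + real n * xh^2 * beta)^2"

definition sgld_lambda :: "real \<Rightarrow> real \<Rightarrow> real \<Rightarrow> nat \<Rightarrow> real" where
  "sgld_lambda alpha beta xh n =
     1 - sgld_eta alpha beta xh n / 2 * (alpha + real n * xh^2 * beta)"

definition sgld_lambda_hat :: "real \<Rightarrow> real \<Rightarrow> real \<Rightarrow> nat \<Rightarrow> real" where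
  "sgld_lambda_hat alpha beta xh n =
     1 - sgld_eta alpha beta xh n / 2 * (alpha + real n * (xh^2 / 4) * beta)"

text \<open>Database D1: n copies of (xh, c xh). Mean mu_j and variance sigma_j^2 of the j-th iterate.\<close>

primrec mu1 :: "real \<Rightarrow> real \<Rightarrow> real \<Rightarrow> real \<Rightarrow> nat \<Rightarrow> nat \<Rightarrow> real" where
  "mu1 alpha beta xh c n 0 = 0"
| "mu1 alpha beta xh c n (Suc j) =
     sgld_lambda alpha beta xh n * mu1 alpha beta xh c n j
     + sgld_eta alpha beta xh n / 2 * real n * beta * c * xh^2"

primrec var1 :: "real \<Rightarrow> real \<Rightarrow> real \<Rightarrow> nat \<Rightarrow> nat \<Rightarrow> real" where
  "var1 alpha beta xh n 0 = 1 / alpha"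
| "var1 alpha beta xh n (Suc j) =
     (sgld_lambda alpha beta xh n)^2 * var1 alpha beta xh n j + sgld_eta alpha beta xh n"

text \<open>Database D2: the point (xh/2, c xh/2) is used at position r (1 <= r <= n) of every epoch,
  i.e. the step from iterate j to iterate j+1 uses it iff (j mod n) + 1 = r.\<close>

definition small_step :: "nat \<Rightarrow> nat \<Rightarrow> nat \<Rightarrow> bool" where
  "small_step n r j \<longleftrightarrow> j mod n + 1 = r"

primrec mu2 :: "real \<Rightarrow> real \<Rightarrow> real \<Rightarrow> real \<Rightarrow> nat \<Rightarrow> nat \<Rightarrow> nat \<Rightarrow> real" where
  "mu2 alpha beta xh c n r 0 = 0"
| "mu2 alpha beta xh c n r (Suc j) =
     (if small_step n r j
      then sgld_lambda_hat alpha beta xh n * mu2 alpha beta xh c n r j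
           + sgld_eta alpha beta xh n / 2 * real n * beta * (c * xh / 2) * (xh / 2)
      else sgld_lambda alpha beta xh n * mu2 alpha beta xh c n r j
           + sgld_eta alpha beta xh n / 2 * real n * beta * c * xh^2)"

primrec var2 :: "real \<Rightarrow> real \<Rightarrow> real \<Rightarrow> nat \<Rightarrow> nat \<Rightarrow> nat \<Rightarrow> real" where
  "var2 alpha beta xh n r 0 = 1 / alpha"
| "var2 alpha beta xh n r (Suc j) =
     (if small_step n r j then (sgld_lambda_hat alpha beta xh n)^2 else (sgld_lambda alpha beta xh n)^2)
       * var2 alpha beta xh n r j + sgld_eta alpha beta xh n"

end

theory Submission
  imports Defs
begin

(* Both chains are affine recursions with the same contraction lam, except at the one step per
   epoch that uses the halved sample. With e_j = c - mu2_j and p_j the product of the contraction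
   factors of D2, one has e_j >= c p_j and var2_j <= p_j^2 / alpha + eta / (1 - lam_hat^2), while the
   mean gap d_j = mu1_j - mu2_j obeys d_(j+1) = lam d_j + [small step] (3/8) eta n xh^2 beta e_j.
   The last small step before N = ceil(kdot) n + n therefore gives
   d_N >= lam^n (3/8) eta n xh^2 beta c p_N, and kdot is chosen so that
   p_N^2 >= lam^(2N) >= R lam^(2n), where R = alpha eta / (alpha eta + 1 - lam^2) controls the
   stationary part of the variance up to a factor 5. Hence
   d_N^2 / var2_N >= alpha ((3/8) eta n xh^2 beta c)^2 lam^(4n) / (lam^(2n) + 5), and Bernoulli's
   inequality lam^n >= 1 - 1/(xh^2 beta) turns this into the stated constant. *)

lemma linear_recurrence_lower_bound:
  fixes x a :: "nat \<Rightarrow> real"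
  assumes step: "\<And>j. a j * x j \<le> x (Suc j)" and nonneg: "\<And>j. 0 \<le> a j"
  shows "(\<Prod>i<j. a i) * x 0 \<le> x j"
proof (induction j)
  case 0
  then show ?case by simp
next
  case (Suc j)
  have "(\<Prod>i<Suc j. a i) * x 0 = a j * ((\<Prod>i<j. a i) * x 0)"
    by (simp add: mult_ac)
  also have "\<dots> \<le> a j * x j"
    using Suc nonneg by (rule mult_left_mono)
  also have "\<dots> \<le> x (Suc j)"
    by (rule step)
  finally show ?case .
qed

lemma linear_recurrence_upper_bound:
  fixes x a :: "nat \<Rightarrow> real"
  assumes step: "\<And>j. x (Suc j) \<le> a j * x j + b"
    and nonneg: "\<And>j. 0 \<le> a j" and bounded: "\<And>j. a j \<le> q"
    and "q < 1" "0 \<le> b"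
  shows "x j \<le> (\<Prod>i<j. a i) * x 0 + b / (1 - q)"
proof (induction j)
  case 0
  have "0 \<le> b / (1 - q)" using assms(4,5) by simp
  then show ?case by simp
next
  case (Suc j)
  have limit: "q * (b / (1 - q)) + b = b / (1 - q)"
    using assms(4) by (simp add: field_simps)
  have "x (Suc j) \<le> a j * ((\<Prod>i<j. a i) * x 0 + b / (1 - q)) + b"
    using step[of j] mult_left_mono[OF Suc nonneg[of j]] by linarith
  also have "\<dots> \<le> (\<Prod>i<Suc j. a i) * x 0 + q * (b / (1 - q)) + b"
    using mult_right_mono[OF bounded[of j], of "b / (1 - q)"] assms(4,5)
    by (simp add: algebra_simps)
  finally show ?case using limit by simp
qed

lemma prod_lessThan_antimono:
  fixes a :: "nat \<Rightarrow> real"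
  assumes "\<And>i. 0 \<le> a i" "\<And>i. a i \<le> 1" "j \<le> k"
  shows "(\<Prod>i<k. a i) \<le> (\<Prod>i<j. a i)"
proof -
  have "(\<Prod>i<k. a i) = (\<Prod>i<j. a i) * (\<Prod>i\<in>{j..<k}. a i)"
    using assms(3) by (metis atLeast0LessThan prod.atLeastLessThan_concat zero_le)
  also have "\<dots> \<le> (\<Prod>i<j. a i)"
    using assms(1,2) by (simp add: mult_left_le prod_le_1 prod_nonneg)
  finally show ?thesis .
qed

lemma exp_neg_two_mult_le:
  fixes x :: real
  assumes "0 < x" "x < 1/3"
  shows "exp (- 2 * x) \<le> 4 * (1 - x) ^ 4"
proof -
  have "exp (- 2 * x) \<le> 1 / (1 + 2 * x)"
    using exp_ge_add_one_self[of "2 * x"] assms(1) by (simp add: exp_minus field_simps)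
  moreover have "1 \<le> 4 * (1 - x) ^ 4 * (1 + 2 * x)"
  proof -
    have "2/3 \<le> (1 - x)^2 * (1 + 2 * x)"
    proof -
      have "(1 - x)^2 * (1 + 2 * x) = 1 - 3 * x^2 + 2 * x^3"
        by (simp add: power2_eq_square power3_eq_cube algebra_simps)
      moreover have "x^2 \<le> 1/9"
        using assms power_mono[of x "1/3" 2] by (simp add: power2_eq_square)
      moreover have "0 \<le> x^3" using assms(1) by simp
      ultimately show ?thesis by linarith
    qed
    moreover have "4/9 \<le> (1 - x)^2"
      using assms power_mono[of "2/3" "1 - x" 2] by (simp add: power2_eq_square)
    ultimately have "4/9 * (2/3) \<le> (1 - x)^2 * ((1 - x)^2 * (1 + 2 * x))"
      by (intro mult_mono) auto
    then show ?thesis by (simp add: power4_eq_xxxx power2_eq_square algebra_simps)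
  qed
  then have "1 / (1 + 2 * x) \<le> 4 * (1 - x) ^ 4"
    using assms(1) by (simp add: divide_le_eq mult.commute)
  ultimately show ?thesis by linarith
qed

lemma explicit_constant_le:
  fixes alpha A c L :: real and n :: nat
  assumes "0 < alpha" "3 < A" "alpha < real n * A" "1 - 1 / A \<le> L" "L \<le> 1"
  shows "exp (- 2 / A) * (alpha / max 6 (1 + 2 * exp (1 / A))) * (3 / (32 * A)) ^ 2 * (c / real n) ^ 2
     \<le> alpha * (3/8 * (2 / (alpha + real n * A) ^ 2) * (real n * A) * c) ^ 2 * L ^ 4 / (L ^ 2 + 5)"
proof -
  define B where "B = real n * A"
  have alpha_lt_B: "alpha < B"
    using assms(3) by (simp add: B_def)
  then have B_pos: "0 < B"
    using assms(1) by simp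
  then have n_pos: "0 < real n"
    using assms(2) by (simp add: B_def zero_less_mult_iff)
  have "0 < 1 - 1 / A"
    using assms(2) by simp
  then have L_pos: "0 < L"
    using assms(4) by linarith
  have "exp (- 2 / A) \<le> 4 * (1 - 1 / A) ^ 4"
    using exp_neg_two_mult_le[of "1 / A"] assms(2) by simp
  also have "\<dots> \<le> 4 * L ^ 4"
    using assms(2,4) by (simp add: power_mono)
  finally have "exp (- 2 / A) * (alpha / max 6 (1 + 2 * exp (1 / A))) * (3 / (32 * A)) ^ 2 * (c / real n) ^ 2
      \<le> 4 * L ^ 4 * (alpha / 6) * (3 / (32 * A)) ^ 2 * (c / real n) ^ 2"
    using assms(1) by (intro mult_right_mono mult_mono divide_left_mono) auto
  also have "\<dots> = 9 * alpha * c ^ 2 * L ^ 4 * B ^ 2 / (16 * (6 * (2 * B) ^ 4))"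
    using n_pos assms(2) by (simp add: B_def field_simps power2_eq_square power4_eq_xxxx)
  also have "\<dots> \<le> 9 * alpha * c ^ 2 * L ^ 4 * B ^ 2 / (16 * ((L ^ 2 + 5) * (alpha + B) ^ 4))"
  proof -
    have "(L ^ 2 + 5) * (alpha + B) ^ 4 \<le> 6 * (2 * B) ^ 4"
      using assms(1,5) alpha_lt_B L_pos by (intro mult_mono power_mono) (auto simp: power_le_one)
    then show ?thesis
      using assms(1) B_pos L_pos by (intro divide_left_mono mult_left_mono mult_pos_pos) (auto simp: add_nonneg_pos)
  qed
  also have "\<dots> = alpha * (3/8 * (2 / (alpha + B) ^ 2) * B * c) ^ 2 * L ^ 4 / (L ^ 2 + 5)"
    using assms(1) B_pos by (simp add: field_simps power2_eq_square power4_eq_xxxx)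
  finally show ?thesis by (simp add: B_def)
qed

lemma power_ceiling_log_epochs_ge:
  fixes q R :: real and n :: nat
  assumes "0 < q" "q < 1" "0 < R" "R \<le> 1" "0 < n"
  shows "R * q ^ (2 * n) \<le> q ^ (2 * (nat \<lceil>1 / (2 * real n) * log q R - 1\<rceil> * n + n))"
proof -
  define k where "k = 1 / (2 * real n) * log q R - 1"
  define N where "N = nat \<lceil>k\<rceil> * n + n"
  have "0 \<le> log q R"
    using assms(1-4) by (simp add: log_def divide_nonpos_neg)
  then have "- 1 \<le> k"
    using assms(5) by (simp add: k_def)
  then have "real (nat \<lceil>k\<rceil>) \<le> k + 1"
    by linarith
  then have "real (2 * N) \<le> log q R + 2 * real n"
    using assms(5) mult_right_mono[of "real (nat \<lceil>k\<rceil>)" "k + 1" "real n"]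
    by (simp add: N_def k_def field_simps)
  then have "q powr (log q R + 2 * real n) \<le> q powr real (2 * N)"
    using assms(1,2) by (intro powr_mono') auto
  moreover have "q powr (log q R + 2 * real n) = R * q ^ (2 * n)"
    using assms(1-3) by (simp add: powr_add powr_realpow[symmetric])
  ultimately have "R * q ^ (2 * n) \<le> q ^ (2 * N)"
    by (simp only: powr_realpow[OF assms(1)])
  then show ?thesis
    by (simp only: N_def k_def)
qed

definition sgld_factor :: "real \<Rightarrow> real \<Rightarrow> real \<Rightarrow> nat \<Rightarrow> nat \<Rightarrow> nat \<Rightarrow> real" where
  "sgld_factor alpha beta xh n r j =
     (if small_step n r j then sgld_lambda_hat alpha beta xh n else sgld_lambda alpha beta xh n)"

lemma var2_Suc_factor:
  "var2 alpha beta xh n r (Suc j) =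
     sgld_factor alpha beta xh n r j ^ 2 * var2 alpha beta xh n r j + sgld_eta alpha beta xh n"
  by (simp add: sgld_factor_def)

lemma mu2_deficit_Suc:
  "c - mu2 alpha beta xh c n r (Suc j) =
     sgld_factor alpha beta xh n r j * (c - mu2 alpha beta xh c n r j)
     + c * sgld_eta alpha beta xh n * alpha / 2"
  by (simp add: sgld_factor_def sgld_lambda_def sgld_lambda_hat_def algebra_simps power2_eq_square)

lemma mean_gap_Suc:
  "mu1 alpha beta xh c n (Suc j) - mu2 alpha beta xh c n r (Suc j) =
     sgld_lambda alpha beta xh n * (mu1 alpha beta xh c n j - mu2 alpha beta xh c n r j)
     + (if small_step n r j
        then 3/8 * sgld_eta alpha beta xh n * (real n * xh^2 * beta) * (c - mu2 alpha beta xh c n r j)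
        else 0)"
  by (cases "small_step n r j")
    (simp_all add: sgld_lambda_def sgld_lambda_hat_def field_simps power2_eq_square)

locale cyclic_sgld =
  fixes alpha beta xh c :: real and n r :: nat
  assumes alpha_pos: "0 < alpha" and beta_pos: "0 < beta" and c_nonneg: "0 \<le> c"
    and large_precision: "3 \<le> alpha + real n * xh^2 * beta"
begin

abbreviation "eta \<equiv> sgld_eta alpha beta xh n"
abbreviation "lam \<equiv> sgld_lambda alpha beta xh n"
abbreviation "lam_hat \<equiv> sgld_lambda_hat alpha beta xh n"
abbreviation "factor \<equiv> sgld_factor alpha beta xh n r"
abbreviation "contraction j \<equiv> \<Prod>i<j. factor i"
abbreviation "deficit j \<equiv> c - mu2 alpha beta xh c n r j"
abbreviation "mean_gap j \<equiv> mu1 alpha beta xh c n j - mu2 alpha beta xh c n r j"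
abbreviation "gap_gain \<equiv> 3/8 * eta * (real n * xh^2 * beta)"
abbreviation "variance j \<equiv> var2 alpha beta xh n r j"

(* the posterior precision of theta given D1 *)
definition precision :: real where
  "precision = alpha + real n * xh^2 * beta"

lemma precision_ge_3: "3 \<le> precision"
  using large_precision by (simp add: precision_def)

lemma n_xh_sq_beta_nonneg: "0 \<le> real n * xh^2 * beta"
  using beta_pos by simp

lemma eta_eq: "eta = 2 / precision^2"
  by (simp add: sgld_eta_def precision_def)

lemma lam_eq: "lam = 1 - 1 / precision"
  using precision_ge_3 by (simp add: sgld_lambda_def eta_eq power2_eq_square precision_def)

lemma lam_hat_eq: "lam_hat = 1 - (alpha + real n * xh^2 * beta / 4) / precision^2"
  by (simp add: sgld_lambda_hat_def eta_eq precision_def)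

lemma eta_pos: "0 < eta"
  using precision_ge_3 by (simp add: eta_eq)

lemma lam_ge: "2/3 \<le> lam"
  using precision_ge_3 by (simp add: lam_eq field_simps)

lemma lam_lt_1: "lam < 1"
  using precision_ge_3 by (simp add: lam_eq)

lemma lam_le_lam_hat: "lam \<le> lam_hat"
proof -
  have "alpha + real n * xh^2 * beta / 4 \<le> precision"
    unfolding precision_def using n_xh_sq_beta_nonneg by linarith
  then have "(alpha + real n * xh^2 * beta / 4) / precision^2 \<le> precision / precision^2"
    by (rule divide_right_mono) simp
  then show ?thesis
    using precision_ge_3 by (simp add: lam_eq lam_hat_eq power2_eq_square)
qed

lemma lam_hat_lt_1: "lam_hat < 1"
proof -
  have "0 < (alpha + real n * xh^2 * beta / 4) / precision^2"
    using alpha_pos n_xh_sq_beta_nonneg precision_ge_3 by (intro divide_pos_pos) auto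
  then show ?thesis by (simp add: lam_hat_eq)
qed

lemma lam_hat_sq_lt_1: "lam_hat ^ 2 < 1"
  using lam_ge lam_le_lam_hat lam_hat_lt_1 by (simp add: power_less_one_iff)

lemma lam_power_ge: "1 - real n / precision \<le> lam ^ n"
proof -
  have "1 + real n * (- (1 / precision)) \<le> (1 + - (1 / precision)) ^ n"
    using precision_ge_3 by (intro Bernoulli_inequality) simp
  then show ?thesis by (simp add: lam_eq)
qed

lemma stationary_ratio_bounds:
  "0 < 1 / (1 + 1 / (alpha * eta) * (1 - lam ^ 2))" "1 / (1 + 1 / (alpha * eta) * (1 - lam ^ 2)) \<le> 1"
proof -
  have "0 \<le> 1 / (alpha * eta) * (1 - lam ^ 2)"
    using alpha_pos eta_pos lam_ge lam_lt_1 by (simp add: power_le_one)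
  then show "0 < 1 / (1 + 1 / (alpha * eta) * (1 - lam ^ 2))" "1 / (1 + 1 / (alpha * eta) * (1 - lam ^ 2)) \<le> 1"
    by simp_all
qed

lemma factor_bounds: "lam \<le> factor j" "factor j \<le> lam_hat" "0 < factor j" "factor j < 1"
  using lam_ge lam_le_lam_hat lam_hat_lt_1 by (auto simp: sgld_factor_def)

lemma contraction_pos: "0 < contraction j"
  using factor_bounds(3) by (simp add: prod_pos)

lemma contraction_ge: "lam ^ j \<le> contraction j"
proof -
  have "(\<Prod>i<j. lam) \<le> contraction j"
    using lam_ge factor_bounds(1) by (intro prod_mono) auto
  then show ?thesis by simp
qed

lemma contraction_antimono: "j \<le> k \<Longrightarrow> contraction k \<le> contraction j"
  using factor_bounds(3,4) by (intro prod_lessThan_antimono) (auto simp: less_imp_le)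

lemma deficit_ge: "c * contraction j \<le> deficit j"
proof -
  have "(\<Prod>i<j. factor i) * deficit 0 \<le> deficit j"
  proof (rule linear_recurrence_lower_bound)
    show "factor i * deficit i \<le> deficit (Suc i)" for i
      using c_nonneg alpha_pos eta_pos unfolding mu2_deficit_Suc by simp
    show "0 \<le> factor i" for i
      using factor_bounds(3) by (rule less_imp_le)
  qed
  then show ?thesis by (simp add: mult.commute)
qed

lemma deficit_nonneg: "0 \<le> deficit j"
  using deficit_ge[of j] mult_nonneg_nonneg[OF c_nonneg less_imp_le[OF contraction_pos[of j]]]
  by linarith

lemma gap_gain_nonneg: "0 \<le> gap_gain"
  using eta_pos n_xh_sq_beta_nonneg by simp

lemma mean_gap_ge: "lam ^ m * mean_gap j \<le> mean_gap (j + m)"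
proof -
  have "(\<Prod>i<m. lam) * mean_gap (j + 0) \<le> mean_gap (j + m)"
  proof (rule linear_recurrence_lower_bound[where x = "\<lambda>i. mean_gap (j + i)"])
    show "lam * mean_gap (j + i) \<le> mean_gap (j + Suc i)" for i
      using mult_nonneg_nonneg[OF gap_gain_nonneg deficit_nonneg[of "j + i"]]
      unfolding add_Suc_right mean_gap_Suc by simp
    show "0 \<le> lam" for i
      using lam_ge by simp
  qed
  then show ?thesis by simp
qed

lemma mean_gap_nonneg: "0 \<le> mean_gap j"
  using mean_gap_ge[of j 0] by simp

lemma mean_gap_after_small_step:
  "small_step n r j \<Longrightarrow> gap_gain * deficit j \<le> mean_gap (Suc j)"
  using mult_nonneg_nonneg[of lam "mean_gap j"] mean_gap_nonneg[of j] lam_ge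
  unfolding mean_gap_Suc by simp

lemma variance_pos: "0 < variance j"
  using alpha_pos eta_pos by (induction j) (simp_all add: var2_Suc_factor add_nonneg_pos)

lemma variance_le: "variance j \<le> contraction j ^ 2 / alpha + eta / (1 - lam_hat ^ 2)"
proof -
  have "(\<Prod>i<j. factor i ^ 2) * variance 0 + eta / (1 - lam_hat ^ 2) \<ge> variance j"
  proof (rule linear_recurrence_upper_bound)
    show "variance (Suc i) \<le> factor i ^ 2 * variance i + eta" for i
      unfolding var2_Suc_factor ..
    show "0 \<le> factor i ^ 2" for i
      by simp
    show "factor i ^ 2 \<le> lam_hat ^ 2" for i
      using factor_bounds(2,3)[of i] by (intro power_mono) auto
    show "lam_hat ^ 2 < 1"
      by (rule lam_hat_sq_lt_1)
    show "0 \<le> eta"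
      using eta_pos by simp
  qed
  then show ?thesis by (simp add: prod_power_distrib)
qed

lemma stationary_variance_le:
  "alpha * eta / (1 - lam_hat ^ 2) \<le> 5 * (1 / (1 + 1 / (alpha * eta) * (1 - lam ^ 2)))"
proof -
  have lam_sq: "0 < 1 - lam ^ 2"
    using lam_ge lam_lt_1 by (simp add: power_less_one_iff)
  have "alpha * eta + (1 - lam ^ 2) \<le> 2 * (alpha + precision) / precision^2"
    using precision_ge_3 by (simp add: eta_eq lam_eq field_simps power2_eq_square)
  also have "\<dots> \<le> 8 * (1 - lam_hat)"
    using alpha_pos precision_ge_3 by (simp add: lam_hat_eq precision_def field_simps)
  also have "\<dots> \<le> 5 * (1 + lam_hat) * (1 - lam_hat)"
    using lam_ge lam_le_lam_hat lam_hat_lt_1 by (intro mult_right_mono) auto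
  finally have "alpha * eta + (1 - lam ^ 2) \<le> 5 * (1 - lam_hat ^ 2)"
    by (simp add: power2_eq_square algebra_simps)
  then have "alpha * eta / (1 - lam_hat ^ 2) \<le> alpha * eta / ((alpha * eta + (1 - lam ^ 2)) / 5)"
    using mult_pos_pos[OF alpha_pos eta_pos] lam_sq lam_hat_sq_lt_1
    by (intro divide_left_mono mult_pos_pos) auto
  also have "\<dots> = 5 * (1 / (1 + 1 / (alpha * eta) * (1 - lam ^ 2)))"
    using alpha_pos eta_pos by (simp add: field_simps)
  finally show ?thesis .
qed

lemma mean_gap_epoch_ge:
  assumes "1 \<le> r" "r \<le> n"
  shows "lam ^ n * gap_gain * (c * contraction (K * n + n)) \<le> mean_gap (K * n + n)"
proof -
  define j where "j = K * n + (r - 1)"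
  have "j mod n = (r - 1) mod n"
    unfolding j_def by (rule mod_mult_self3)
  then have small: "small_step n r j"
    using assms by (simp add: small_step_def)
  have N: "K * n + n = Suc j + (n - r)"
    using assms by (simp add: j_def)
  have "c * contraction (K * n + n) \<le> c * contraction j"
    using c_nonneg contraction_antimono[of j "K * n + n"] by (simp add: N mult_left_mono)
  also have "\<dots> \<le> deficit j"
    by (rule deficit_ge)
  finally have "gap_gain * (c * contraction (K * n + n)) \<le> gap_gain * deficit j"
    using gap_gain_nonneg by (rule mult_left_mono)
  also have "\<dots> \<le> mean_gap (Suc j)"
    using small by (rule mean_gap_after_small_step)
  finally have jump: "gap_gain * (c * contraction (K * n + n)) \<le> mean_gap (Suc j)" .
  have decay: "lam ^ n \<le> lam ^ (n - r)"
    using lam_ge lam_lt_1 by (intro power_decreasing) auto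
  have "0 \<le> gap_gain * (c * contraction (K * n + n))"
    using gap_gain_nonneg c_nonneg contraction_pos[of "K * n + n"] by simp
  then have "lam ^ n * (gap_gain * (c * contraction (K * n + n))) \<le> lam ^ (n - r) * mean_gap (Suc j)"
    using lam_ge by (intro mult_mono[OF decay jump]) simp_all
  also have "\<dots> \<le> mean_gap (K * n + n)"
    unfolding N by (rule mean_gap_ge)
  finally show ?thesis by (simp add: mult.assoc)
qed

lemma mean_gap_sq_over_variance_ge:
  assumes "1 \<le> r" "r \<le> n"
    and epochs: "1 / (1 + 1 / (alpha * eta) * (1 - lam ^ 2)) * lam ^ (2 * n)
                   \<le> lam ^ (2 * (K * n + n))"
  shows "alpha * (gap_gain * c) ^ 2 * lam ^ (4 * n) / (lam ^ (2 * n) + 5)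
           \<le> mean_gap (K * n + n) ^ 2 / variance (K * n + n)"
proof -
  define N where "N = K * n + n"
  define p where "p = contraction N"
  define L where "L = lam ^ n"
  define R where "R = 1 / (1 + 1 / (alpha * eta) * (1 - lam ^ 2))"
  have L_pos: "0 < L" and p_pos: "0 < p"
    using lam_ge contraction_pos by (simp_all add: L_def p_def)
  have "lam ^ N \<le> p"
    unfolding p_def by (rule contraction_ge)
  then have "lam ^ (2 * N) \<le> p ^ 2"
    using lam_ge by (simp add: power_mult power_mono mult.commute)
  then have R_le: "R * L ^ 2 \<le> p ^ 2"
    using epochs by (simp add: R_def L_def N_def power_mult[symmetric] mult.commute)
  have "variance N \<le> p ^ 2 / alpha + eta / (1 - lam_hat ^ 2)"
    unfolding p_def by (rule variance_le)
  also have "eta / (1 - lam_hat ^ 2) \<le> 5 * R / alpha"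
  proof -
    have "alpha * (eta / (1 - lam_hat ^ 2)) \<le> 5 * R"
      using stationary_variance_le by (simp add: R_def)
    then show ?thesis
      using alpha_pos by (simp only: pos_le_divide_eq mult.commute)
  qed
  also have "5 * R / alpha \<le> 5 * (p ^ 2 / L ^ 2) / alpha"
    using R_le L_pos alpha_pos by (intro divide_right_mono mult_left_mono) (auto simp: field_simps)
  finally have var_le: "variance N \<le> p ^ 2 * (L ^ 2 + 5) / (alpha * L ^ 2)"
    using L_pos alpha_pos by (simp add: field_simps)
  have gap_ge: "L * gap_gain * (c * p) \<le> mean_gap N"
    using mean_gap_epoch_ge[OF assms(1,2)] by (simp add: L_def p_def N_def)
  have "0 \<le> L * gap_gain * (c * p)"
    using L_pos gap_gain_nonneg c_nonneg p_pos by simp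
  then have ratio: "(L * gap_gain * (c * p)) ^ 2 / (p ^ 2 * (L ^ 2 + 5) / (alpha * L ^ 2))
                      \<le> mean_gap N ^ 2 / variance N"
    using gap_ge var_le variance_pos[of N] by (intro frac_le power_mono) auto
  have cancel: "(L * g * (c * p)) ^ 2 / (p ^ 2 * Y / (alpha * L ^ 2)) = alpha * (g * c) ^ 2 * L ^ 4 / Y"
    if "0 < Y" for g Y
    using L_pos p_pos that by (simp add: field_simps power2_eq_square power4_eq_xxxx)
  have "alpha * (gap_gain * c) ^ 2 * L ^ 4 / (L ^ 2 + 5) \<le> mean_gap N ^ 2 / variance N"
    using ratio by (subst (asm) cancel) (simp_all add: add_nonneg_pos)
  moreover have "L ^ 4 = lam ^ (4 * n)" "L ^ 2 = lam ^ (2 * n)"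
    by (simp_all add: L_def power_mult[symmetric] mult.commute)
  ultimately show ?thesis by (simp only: N_def)
qed

end

theorem lemmaA5:
  fixes alpha beta xh c :: real and n r :: nat
  assumes "alpha > 0" "beta > 0" "xh > 0" "c > 0" "n \<ge> 2"
    and "xh^2 * beta > 3"
    and "real n > 1 / (2 * alpha * xh^2 * beta) - 1 / (xh^2 * beta)"
    and "real n > alpha / (xh^2 * beta)"
    and "real n > alpha / (xh^2 * beta) * (exp (2 / (xh^2 * beta)) - 2) + 1 / (2 * xh^2 * beta)"
    and "1 \<le> r" "r \<le> n"
  shows
    "let eta = sgld_eta alpha beta xh n;
         lam = sgld_lambda alpha beta xh n;
         kdot = 1 / (2 * real n) * log lam (1 / (1 + 1 / (alpha * eta) * (1 - lam^2))) - 1;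
         N = nat \<lceil>kdot\<rceil> * n + n;
         v1 = max 6 (1 + 2 * exp (1 / (xh^2 * beta)))
     in (mu1 alpha beta xh c n N - mu2 alpha beta xh c n r N)^2 / var2 alpha beta xh n r N
        \<ge> exp (- 2 / (xh^2 * beta)) * (alpha / v1) * (3 / (32 * xh^2 * beta))^2 * (c / real n)^2"
proof -
  define A where "A = xh^2 * beta"
  have A: "3 < A" "alpha < real n * A" "0 < real n"
    using assms(5,6,8) by (simp_all add: A_def pos_divide_less_eq)
  have "2 * 3 \<le> real n * A"
    using A assms(5) by (intro mult_mono) auto
  then have "3 \<le> alpha + real n * xh^2 * beta"
    using assms(1) by (simp add: A_def mult.assoc)
  then interpret cyclic_sgld alpha beta xh c n r
    using assms(1,2,4) by unfold_locales simp_all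
  define R where "R = 1 / (1 + 1 / (alpha * eta) * (1 - lam ^ 2))"
  define K where "K = nat \<lceil>1 / (2 * real n) * log lam R - 1\<rceil>"
  have epochs: "R * lam ^ (2 * n) \<le> lam ^ (2 * (K * n + n))"
    unfolding K_def using lam_ge lam_lt_1 stationary_ratio_bounds A(3)
    by (intro power_ceiling_log_epochs_ge) (auto simp: R_def)
  have snr: "alpha * (gap_gain * c) ^ 2 * lam ^ (4 * n) / (lam ^ (2 * n) + 5)
               \<le> mean_gap (K * n + n) ^ 2 / variance (K * n + n)"
    using assms(10,11) epochs unfolding R_def by (rule mean_gap_sq_over_variance_ge)
  have "real n / precision \<le> 1 / A"
    using A assms(1) by (simp add: precision_def A_def field_simps)
  then have "1 - 1 / A \<le> lam ^ n"
    using lam_power_ge by linarith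
  then have "exp (- 2 / A) * (alpha / max 6 (1 + 2 * exp (1 / A))) * (3 / (32 * A)) ^ 2 * (c / real n) ^ 2
      \<le> alpha * (3/8 * (2 / (alpha + real n * A) ^ 2) * (real n * A) * c) ^ 2 * (lam ^ n) ^ 4
           / ((lam ^ n) ^ 2 + 5)"
    using A assms(1) lam_ge lam_lt_1 by (intro explicit_constant_le) (auto simp: power_le_one)
  also have "\<dots> = alpha * (gap_gain * c) ^ 2 * lam ^ (4 * n) / (lam ^ (2 * n) + 5)"
    by (simp add: A_def sgld_eta_def mult.assoc power_mult[symmetric] mult.commute[of n])
  also note snr
  finally show ?thesis
    by (simp add: Let_def K_def R_def A_def mult.assoc)
qed

end
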